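(* Let $E_1,H_1,\dots,E_n,H_n$ be logically independent events, let $\mathcal F_k=\{E_1|H_1,\dots,E_k|H_k\}$, and let $(p_1,\dots,p_n)\in[0,1]^n$ be an assessment on $\mathcal F_n$. For each $k=2,\dots,n$, the set of coherent extensions $z$ of $(p_1,\dots,p_k)$ on $\mathcal F_k$ to the quasi conjunction $\mathcal C(\mathcal F_k)$ is the interval $[l_k,u_k]$ with $$l_k=T_L(p_1,\dots,p_k)=\max\Big(\sum_{i=1}^k p_i-(k-1),0\Big),$$ $$u_k=S_0^H(p_1,\dots,p_k)=\begin{cases}1,& p_i=1\text{ for some } i,\\[2pt] \dfrac{\sum_{i=1}^k\frac{p_i}{1-p_i}}{\sum_{i=1}^k\frac{p_i}{1-p_i}+1},& p_i<1\text{ for all } i.\end{cases}$$ *)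

theory Defs
  imports Complex_Main
begin

text \<open>A conditional event E|H is represented by the pair of sets (E, H);
  a family of conditional events is indexed by a finite index set I,
  with consequents A i and antecedents B i, and an assessment p i.\<close>

definition random_gain ::
  "'i set \<Rightarrow> ('i \<Rightarrow> 'w set) \<Rightarrow> ('i \<Rightarrow> 'w set) \<Rightarrow> ('i \<Rightarrow> real) \<Rightarrow> ('i \<Rightarrow> real) \<Rightarrow> 'w \<Rightarrow> real"
  where "random_gain J A B p s \<omega> =
    (\<Sum>j\<in>J. s j * (if \<omega> \<in> B j then 1 else 0) * ((if \<omega> \<in> A j then 1 else 0) - p j))"

definition coherent ::
  "'i set \<Rightarrow> ('i \<Rightarrow> 'w set) \<Rightarrow> ('i \<Rightarrow> 'w set) \<Rightarrow> ('i \<Rightarrow> real) \<Rightarrow> bool"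
  where "coherent I A B p \<longleftrightarrow>
    (\<forall>J. J \<subseteq> I \<longrightarrow> J \<noteq> {} \<longrightarrow>
       (\<forall>s. \<exists>\<omega>\<in>(\<Union>j\<in>J. B j). random_gain J A B p s \<omega> \<ge> 0))"

definition logically_independent :: "nat \<Rightarrow> (nat \<Rightarrow> 'w set) \<Rightarrow> (nat \<Rightarrow> 'w set) \<Rightarrow> bool"
  where "logically_independent n E H \<longleftrightarrow>
    (\<forall>a b :: nat \<Rightarrow> bool.
       (\<Inter>i\<in>{1..n}. (if a i then E i else - E i) \<inter> (if b i then H i else - H i)) \<noteq> {})"

definition qc_cons :: "nat \<Rightarrow> (nat \<Rightarrow> 'w set) \<Rightarrow> (nat \<Rightarrow> 'w set) \<Rightarrow> 'w set"
  where "qc_cons k E H = (\<Inter>i\<in>{1..k}. E i \<union> - H i)"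

definition qc_ant :: "nat \<Rightarrow> (nat \<Rightarrow> 'w set) \<Rightarrow> 'w set"
  where "qc_ant k H = (\<Union>i\<in>{1..k}. H i)"

text \<open>The family F_k extended by its quasi conjunction, placed at index 0.\<close>

definition ext_cons :: "nat \<Rightarrow> (nat \<Rightarrow> 'w set) \<Rightarrow> (nat \<Rightarrow> 'w set) \<Rightarrow> nat \<Rightarrow> 'w set"
  where "ext_cons k E H = (\<lambda>i. if i = 0 then qc_cons k E H else E i)"

definition ext_ant :: "nat \<Rightarrow> (nat \<Rightarrow> 'w set) \<Rightarrow> nat \<Rightarrow> 'w set"
  where "ext_ant k H = (\<lambda>i. if i = 0 then qc_ant k H else H i)"

definition T_L :: "nat \<Rightarrow> (nat \<Rightarrow> real) \<Rightarrow> real"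
  where "T_L k p = max ((\<Sum>i=1..k. p i) - (real k - 1)) 0"

definition S0H :: "nat \<Rightarrow> (nat \<Rightarrow> real) \<Rightarrow> real"
  where "S0H k p =
    (if \<exists>i\<in>{1..k}. p i = 1 then 1
     else (let s = (\<Sum>i=1..k. p i / (1 - p i)) in s / (s + 1)))"

end

theory Submission
  imports Defs
begin

(*
  Necessity is a pair of Dutch books: betting against the quasi conjunction and on every
  E_i|H_i with unit stakes gives z >= sum p_i - (k - 1), while betting on it and against each
  E_i|H_i with stake proportional to 1/(1 - p_i) gives z <= S_0^H(p_1, ..., p_k).

  Sufficiency rests on fair weightings: if every subfamily admits nonnegative weights on worlds
  in the disjunction of its antecedents under which each of its bets has zero expected gain,
  no choice of stakes makes the gain negative everywhere, so the assessment is coherent.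
  Logical independence supplies the worlds needed for explicit fair weightings at z = T_L and
  at z = S_0^H, and fair weightings for two values of z mix into one for every value between.
*)

section \<open>Bets and fair weightings\<close>

definition unit_gain :: "('i \<Rightarrow> 'w set) \<Rightarrow> ('i \<Rightarrow> 'w set) \<Rightarrow> ('i \<Rightarrow> real) \<Rightarrow> 'i \<Rightarrow> 'w \<Rightarrow> real"
  where "unit_gain A B p j \<omega> = (if \<omega> \<in> B j then (if \<omega> \<in> A j then 1 else 0) - p j else 0)"

lemma random_gain_eq_sum_unit_gain:
  "random_gain J A B p s \<omega> = (\<Sum>j\<in>J. s j * unit_gain A B p j \<omega>)"
  unfolding random_gain_def unit_gain_def by (intro sum.cong) auto

lemma coherent_imp_unit_interval:
  assumes "coherent I A B p" "i \<in> I"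
  shows "0 \<le> p i" "p i \<le> 1"
proof -
  have "\<exists>\<omega>\<in>(\<Union>j\<in>{i}. B j). 0 \<le> random_gain {i} A B p (\<lambda>_. s) \<omega>" for s
    using assms unfolding coherent_def by blast
  then have "\<exists>\<omega>\<in>B i. 0 \<le> s * unit_gain A B p i \<omega>" for s
    by (simp add: random_gain_eq_sum_unit_gain)
  from this[of 1] this[of "-1"] show "0 \<le> p i" "p i \<le> 1"
    unfolding unit_gain_def by (auto split: if_splits)
qed

definition weighted_sum :: "(real \<times> 'w) list \<Rightarrow> ('w \<Rightarrow> real) \<Rightarrow> real"
  where "weighted_sum ds g = (\<Sum>(c, \<omega>)\<leftarrow>ds. c * g \<omega>)"

lemma weighted_sum_simps [simp]:
  "weighted_sum [] g = 0"
  "weighted_sum ((c, \<omega>) # ds) g = c * g \<omega> + weighted_sum ds g"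
  "weighted_sum (ds @ ds') g = weighted_sum ds g + weighted_sum ds' g"
  by (simp_all add: weighted_sum_def)

lemma weighted_sum_map:
  "distinct xs \<Longrightarrow> weighted_sum (map (\<lambda>m. (w m, P m)) xs) g = (\<Sum>m\<in>set xs. w m * g (P m))"
  by (simp add: weighted_sum_def o_def sum_list_distinct_conv_sum_set)

lemma weighted_sum_map_upt:
  "weighted_sum (map (\<lambda>m. (w m, P m)) [a..<Suc b]) g = (\<Sum>m=a..b. w m * g (P m))"
  by (simp add: weighted_sum_map atLeastLessThanSuc_atLeastAtMost del: upt_Suc)

lemma weighted_sum_cong:
  "(\<And>c \<omega>. (c, \<omega>) \<in> set ds \<Longrightarrow> f \<omega> = g \<omega>) \<Longrightarrow> weighted_sum ds f = weighted_sum ds g"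
  by (induction ds) fastforce+

lemma weighted_sum_add_const:
  "weighted_sum ds (\<lambda>\<omega>. f \<omega> + a) = weighted_sum ds f + a * weighted_sum ds (\<lambda>_. 1)"
  by (induction ds) (auto simp: algebra_simps)

lemma weighted_sum_sum_mult:
  "weighted_sum ds (\<lambda>\<omega>. \<Sum>j\<in>J. s j * f j \<omega>) = (\<Sum>j\<in>J. s j * weighted_sum ds (f j))"
  by (induction ds) (auto simp: sum.distrib sum_distrib_left algebra_simps)

lemma weighted_sum_nonpos:
  "(\<And>c \<omega>. (c, \<omega>) \<in> set ds \<Longrightarrow> 0 \<le> c \<and> g \<omega> \<le> 0) \<Longrightarrow> weighted_sum ds g \<le> 0"
  by (induction ds) (force intro!: add_nonpos_nonpos mult_nonneg_nonpos)+

lemma weighted_sum_neg: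
  assumes "\<And>c \<omega>. (c, \<omega>) \<in> set ds \<Longrightarrow> 0 \<le> c \<and> g \<omega> < 0" and "0 < weighted_sum ds (\<lambda>_. 1)"
  shows "weighted_sum ds g < 0"
  using assms
proof (induction ds)
  case (Cons d ds)
  obtain c \<omega> where d: "d = (c, \<omega>)" by fastforce
  have "0 \<le> c" "g \<omega> < 0" using Cons.prems(1) d by auto
  have tail: "0 \<le> c' \<and> g \<omega>' < 0" if "(c', \<omega>') \<in> set ds" for c' \<omega>'
    using Cons.prems(1)[of c' \<omega>'] that by auto
  show ?case
  proof (cases "c = 0")
    case True
    then have "0 < weighted_sum ds (\<lambda>_. 1)" using Cons.prems(2) d by simp
    then show ?thesis using Cons.IH[OF tail] d True by simp
  next
    case False
    then have "c * g \<omega> < 0" using \<open>0 \<le> c\<close> \<open>g \<omega> < 0\<close> by (simp add: mult_pos_neg)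
    moreover have "weighted_sum ds g \<le> 0" using tail by (intro weighted_sum_nonpos) (simp add: less_imp_le)
    ultimately show ?thesis using d by simp
  qed
qed simp

definition mixture :: "real \<Rightarrow> (real \<times> 'w) list \<Rightarrow> real \<Rightarrow> (real \<times> 'w) list \<Rightarrow> (real \<times> 'w) list"
  where "mixture a ds b ds' = map (\<lambda>(c, \<omega>). (a * c, \<omega>)) ds @ map (\<lambda>(c, \<omega>). (b * c, \<omega>)) ds'"

lemma weighted_sum_mixture:
  "weighted_sum (mixture a ds b ds') g = a * weighted_sum ds g + b * weighted_sum ds' g"
proof -
  have "weighted_sum (map (\<lambda>(c, \<omega>). (a * c, \<omega>)) ds) g = a * weighted_sum ds g" for a ds
    by (induction ds) (auto simp: algebra_simps)
  then show ?thesis by (simp add: mixture_def)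
qed

lemma mixture_nonneg:
  assumes "\<forall>(c, \<omega>)\<in>set ds. 0 \<le> c \<and> \<omega> \<in> U" "\<forall>(c, \<omega>)\<in>set ds'. 0 \<le> c \<and> \<omega> \<in> U" "0 \<le> a" "0 \<le> b"
  shows "\<forall>(c, \<omega>)\<in>set (mixture a ds b ds'). 0 \<le> c \<and> \<omega> \<in> U"
  using assms unfolding mixture_def by (auto simp: mult_nonneg_nonneg)

lemma unit_gain_update_other: "j \<noteq> i \<Longrightarrow> unit_gain A B (p(i := z)) j = unit_gain A B p j"
  by (simp add: unit_gain_def fun_eq_iff)

lemma weighted_sum_unit_gain_update:
  assumes "\<forall>(c, \<omega>)\<in>set ds. \<omega> \<in> B i"
  shows "weighted_sum ds (unit_gain A B (p(i := z)) i)
    = weighted_sum ds (unit_gain A B (p(i := t)) i) + (t - z) * weighted_sum ds (\<lambda>_. 1)"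
proof -
  have "weighted_sum ds (unit_gain A B (p(i := z)) i)
      = weighted_sum ds (\<lambda>\<omega>. unit_gain A B (p(i := t)) i \<omega> + (t - z))"
    using assms by (intro weighted_sum_cong) (auto simp: unit_gain_def)
  then show ?thesis unfolding weighted_sum_add_const .
qed

definition fair_weighting ::
  "'w set \<Rightarrow> 'i set \<Rightarrow> ('i \<Rightarrow> 'w set) \<Rightarrow> ('i \<Rightarrow> 'w set) \<Rightarrow> ('i \<Rightarrow> real) \<Rightarrow> (real \<times> 'w) list \<Rightarrow> bool"
  where "fair_weighting U J A B p ds \<longleftrightarrow>
    (\<forall>(c, \<omega>)\<in>set ds. 0 \<le> c \<and> \<omega> \<in> U) \<and> 0 < weighted_sum ds (\<lambda>_. 1) \<and>
    (\<forall>j\<in>J. weighted_sum ds (unit_gain A B p j) = 0)"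

lemma fair_weighting_mono:
  "fair_weighting U J A B p ds \<Longrightarrow> U \<subseteq> U' \<Longrightarrow> J' \<subseteq> J \<Longrightarrow> fair_weighting U' J' A B p ds"
  unfolding fair_weighting_def by blast

lemma fair_weighting_imp_nonneg_gain:
  assumes "fair_weighting U J A B p ds"
  shows "\<exists>\<omega>\<in>U. 0 \<le> random_gain J A B p s \<omega>"
proof (rule ccontr)
  assume "\<not> ?thesis"
  with assms have "weighted_sum ds (random_gain J A B p s) < 0"
    unfolding fair_weighting_def by (intro weighted_sum_neg) (auto simp: not_le)
  moreover have "weighted_sum ds (random_gain J A B p s) = 0"
    using assms unfolding fair_weighting_def random_gain_eq_sum_unit_gain weighted_sum_sum_mult
    by simp
  ultimately show False by simp
qed

lemma coherentI_fair_weighting: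
  assumes "\<And>J. J \<subseteq> I \<Longrightarrow> J \<noteq> {} \<Longrightarrow> \<exists>ds. fair_weighting (\<Union>j\<in>J. B j) J A B p ds"
  shows "coherent I A B p"
  using assms fair_weighting_imp_nonneg_gain unfolding coherent_def by metis

lemma fair_weighting_mix:
  assumes d1: "fair_weighting U J A B (p(i := t1)) d1" and d2: "fair_weighting U J A B (p(i := t2)) d2"
    and U: "U \<subseteq> B i" and z: "t1 \<le> z" "z \<le> t2"
  shows "\<exists>d. fair_weighting U J A B (p(i := z)) d"
proof (cases "z = t1")
  case True
  then show ?thesis using d1 by blast
next
  case False
  define m1 m2 where "m1 = weighted_sum d1 (\<lambda>_. 1)" and "m2 = weighted_sum d2 (\<lambda>_. 1)"
  have "0 < m1" "0 < m2" using d1 d2 unfolding fair_weighting_def m1_def m2_def by auto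
  define a b where "a = (t2 - z) / m1" and "b = (z - t1) / m2"
  have "0 \<le> a" "0 < b" unfolding a_def b_def using \<open>0 < m1\<close> \<open>0 < m2\<close> z False by auto
  have scaled: "a * m1 = t2 - z" "b * m2 = z - t1"
    unfolding a_def b_def using \<open>0 < m1\<close> \<open>0 < m2\<close> by simp_all
  define d where "d = mixture a d1 b d2"
  have shift: "weighted_sum dk (unit_gain A B (p(i := z)) i) = (t - z) * weighted_sum dk (\<lambda>_. 1)"
    if "fair_weighting U J A B (p(i := t)) dk" "i \<in> J" for dk t
    using that U weighted_sum_unit_gain_update[of dk B i A p z t] unfolding fair_weighting_def by auto
  have fair: "weighted_sum d (unit_gain A B (p(i := z)) j) = 0" if "j \<in> J" for j
  proof (cases "j = i")
    case True
    have "weighted_sum d (unit_gain A B (p(i := z)) j) = a * ((t1 - z) * m1) + b * ((t2 - z) * m2)"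
      unfolding d_def using shift[OF d1] shift[OF d2] that True m1_def m2_def
      by (simp add: weighted_sum_mixture)
    also have "\<dots> = (t1 - z) * (a * m1) + (t2 - z) * (b * m2)" by (simp add: algebra_simps)
    also have "\<dots> = 0"
      unfolding scaled by (simp add: algebra_simps)
    finally show ?thesis .
  next
    case False
    have "weighted_sum dk (unit_gain A B p j) = 0" if "fair_weighting U J A B (p(i := t)) dk" for dk t
      using that \<open>j \<in> J\<close> unit_gain_update_other[OF False, of A B p t]
      unfolding fair_weighting_def by metis
    then show ?thesis
      using d1 d2 unfolding d_def unit_gain_update_other[OF False] by (simp add: weighted_sum_mixture)
  qed
  have mass: "0 < weighted_sum d (\<lambda>_. 1)"
    unfolding d_def weighted_sum_mixture m1_def[symmetric] m2_def[symmetric]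
    using \<open>0 \<le> a\<close> \<open>0 < b\<close> \<open>0 < m1\<close> \<open>0 < m2\<close> by (simp add: add_nonneg_pos)
  have nonneg: "\<forall>(c, \<omega>)\<in>set d. 0 \<le> c \<and> \<omega> \<in> U"
    using d1 d2 \<open>0 \<le> a\<close> \<open>0 < b\<close> unfolding d_def fair_weighting_def by (intro mixture_nonneg) auto
  show ?thesis unfolding fair_weighting_def using nonneg mass fair by (intro exI[of _ d]) simp
qed

section \<open>Dutch books against the quasi conjunction\<close>

lemma unit_gain_ext_qc:
  "unit_gain (ext_cons k E H) (ext_ant k H) (p(0 := z)) 0 \<omega> =
    (if \<omega> \<in> qc_ant k H then (if \<omega> \<in> qc_cons k E H then 1 else 0) - z else 0)"
  by (simp add: unit_gain_def ext_cons_def ext_ant_def)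

lemma unit_gain_ext_member:
  "j \<noteq> 0 \<Longrightarrow> unit_gain (ext_cons k E H) (ext_ant k H) (p(0 := z)) j = unit_gain E H p j"
  by (simp add: unit_gain_def ext_cons_def ext_ant_def fun_eq_iff)

lemma UN_ext_ant: "(\<Union>j\<in>insert 0 {1..k}. ext_ant k H j) = qc_ant k H"
  unfolding ext_ant_def qc_ant_def by auto

lemma coherent_qc_gain_nonneg:
  assumes "coherent (insert 0 {1..k}) (ext_cons k E H) (ext_ant k H) (p(0 := z))"
  shows "\<exists>\<omega>\<in>qc_ant k H.
    0 \<le> s0 * ((if \<omega> \<in> qc_cons k E H then 1 else 0) - z) + (\<Sum>i=1..k. s i * unit_gain E H p i \<omega>)"
proof -
  obtain \<omega> where \<omega>: "\<omega> \<in> qc_ant k H"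
    and gain: "0 \<le> random_gain (insert 0 {1..k}) (ext_cons k E H) (ext_ant k H) (p(0 := z)) (s(0 := s0)) \<omega>"
    using assms[unfolded coherent_def, rule_format, of "insert 0 {1..k}" "s(0 := s0)"]
    unfolding UN_ext_ant by blast
  have "(\<Sum>i=1..k. (s(0 := s0)) i * unit_gain (ext_cons k E H) (ext_ant k H) (p(0 := z)) i \<omega>)
      = (\<Sum>i=1..k. s i * unit_gain E H p i \<omega>)"
    by (intro sum.cong) (auto simp: unit_gain_ext_member)
  then show ?thesis
    using gain by (intro bexI[OF _ \<omega>]) (simp add: random_gain_eq_sum_unit_gain unit_gain_ext_qc \<omega>)
qed

lemma unit_gain_le: "p i \<le> 1 \<Longrightarrow> unit_gain E H p i \<omega> \<le> 1 - p i"
  by (simp add: unit_gain_def)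

lemma T_L_le_if_coherent:
  assumes coh: "coherent (insert 0 {1..k}) (ext_cons k E H) (ext_ant k H) (p(0 := z))"
    and p_le: "\<forall>i\<in>{1..k}. p i \<le> 1"
  shows "T_L k p \<le> z"
proof -
  let ?qc = "\<lambda>\<omega>. if \<omega> \<in> qc_cons k E H then 1 else 0 :: real"
  obtain \<omega> where gain: "0 \<le> - (?qc \<omega> - z) + (\<Sum>i=1..k. 1 * unit_gain E H p i \<omega>)"
    using coherent_qc_gain_nonneg[OF coh, of "-1" "\<lambda>_. 1"] by auto
  have "(\<Sum>i=1..k. unit_gain E H p i \<omega>) \<le> (\<Sum>i=1..k. 1 - p i) - (1 - ?qc \<omega>)"
  proof (cases "\<omega> \<in> qc_cons k E H")
    case True
    have "(\<Sum>i=1..k. unit_gain E H p i \<omega>) \<le> (\<Sum>i=1..k. 1 - p i)"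
      using p_le by (intro sum_mono unit_gain_le) auto
    then show ?thesis using True by simp
  next
    case False
    then obtain i0 where i0: "i0 \<in> {1..k}" "\<omega> \<in> H i0" "\<omega> \<notin> E i0"
      unfolding qc_cons_def by blast
    have "(\<Sum>i=1..k. unit_gain E H p i \<omega>) \<le> (\<Sum>i=1..k. (1 - p i) - (if i = i0 then 1 else 0))"
      using p_le i0 by (intro sum_mono) (auto simp: unit_gain_def)
    then show ?thesis using False i0(1) by (simp add: sum_subtractf)
  qed
  then have "1 - (\<Sum>i=1..k. 1 - p i) \<le> z" using gain by simp
  moreover have "0 \<le> z" using coherent_imp_unit_interval(1)[OF coh, of 0] by simp
  ultimately show ?thesis unfolding T_L_def by (simp add: sum_subtractf)
qed

lemma qc_indicator_le_sum_odds:
  assumes \<omega>: "\<omega> \<in> qc_ant k H" and p: "\<forall>i\<in>{1..k}. 0 \<le> p i \<and> p i < 1"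
  shows "(if \<omega> \<in> qc_cons k E H then 1 else 0) * ((\<Sum>i=1..k. p i / (1 - p i)) + 1)
    - (\<Sum>i=1..k. unit_gain E H p i \<omega> / (1 - p i)) \<le> (\<Sum>i=1..k. p i / (1 - p i))"
proof (cases "\<omega> \<in> qc_cons k E H")
  case True
  obtain i0 where i0: "i0 \<in> {1..k}" "\<omega> \<in> H i0" using \<omega> unfolding qc_ant_def by blast
  have "(\<Sum>i=1..k. if i = i0 then 1 else 0) \<le> (\<Sum>i=1..k. unit_gain E H p i \<omega> / (1 - p i))"
  proof (intro sum_mono)
    fix i assume i: "i \<in> {1..k}"
    have "\<omega> \<in> H i \<Longrightarrow> \<omega> \<in> E i" using True i unfolding qc_cons_def by blast
    then show "(if i = i0 then 1 else 0) \<le> unit_gain E H p i \<omega> / (1 - p i)"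
      using i0 p i by (auto simp: unit_gain_def)
  qed
  then show ?thesis using True i0(1) by simp
next
  case False
  have "(\<Sum>i=1..k. - (unit_gain E H p i \<omega> / (1 - p i))) \<le> (\<Sum>i=1..k. p i / (1 - p i))"
  proof (intro sum_mono)
    fix i assume i: "i \<in> {1..k}"
    then have "0 \<le> p i / (1 - p i)" using p by (simp add: divide_nonneg_pos)
    then show "- (unit_gain E H p i \<omega> / (1 - p i)) \<le> p i / (1 - p i)"
      using p i by (auto simp: unit_gain_def)
  qed
  then show ?thesis using False by (simp add: sum_negf)
qed

lemma le_S0H_if_coherent:
  assumes coh: "coherent (insert 0 {1..k}) (ext_cons k E H) (ext_ant k H) (p(0 := z))"
    and p01: "\<forall>i\<in>{1..k}. 0 \<le> p i \<and> p i \<le> 1"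
  shows "z \<le> S0H k p"
proof (cases "\<exists>i\<in>{1..k}. p i = 1")
  case True
  then show ?thesis using coherent_imp_unit_interval(2)[OF coh, of 0] by (simp add: S0H_def)
next
  case False
  then have p: "\<forall>i\<in>{1..k}. 0 \<le> p i \<and> p i < 1" using p01 by force
  define \<sigma> where "\<sigma> = (\<Sum>i=1..k. p i / (1 - p i))"
  have "0 \<le> \<sigma>" unfolding \<sigma>_def using p by (intro sum_nonneg divide_nonneg_pos) auto
  define c where "c = 1 / (\<sigma> + 1)"
  have "0 < c" using \<open>0 \<le> \<sigma>\<close> by (simp add: c_def)
  let ?qc = "\<lambda>\<omega>. if \<omega> \<in> qc_cons k E H then 1 else 0 :: real"
  let ?odds_bet = "\<lambda>\<omega>. \<Sum>i=1..k. unit_gain E H p i \<omega> / (1 - p i)"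
  obtain \<omega> where \<omega>: "\<omega> \<in> qc_ant k H"
    and gain: "0 \<le> 1 * (?qc \<omega> - z) + (\<Sum>i=1..k. - c / (1 - p i) * unit_gain E H p i \<omega>)"
    using coherent_qc_gain_nonneg[OF coh, of 1 "\<lambda>i. - c / (1 - p i)"] by blast
  have "z \<le> ?qc \<omega> - c * ?odds_bet \<omega>"
    using gain by (simp add: sum_distrib_left sum_negf)
  also have "\<dots> = c * (?qc \<omega> * (\<sigma> + 1) - ?odds_bet \<omega>)"
    using \<open>0 \<le> \<sigma>\<close> by (simp add: c_def field_simps)
  also have "\<dots> \<le> c * \<sigma>"
    using qc_indicator_le_sum_odds[OF \<omega> p] \<open>0 < c\<close> unfolding \<sigma>_def by simp
  also have "c * \<sigma> = S0H k p" using False by (simp add: S0H_def Let_def \<sigma>_def c_def)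
  finally show ?thesis .
qed

section \<open>Fair weightings on constituents\<close>

lemma fair_weighting_qcI:
  assumes nonneg: "\<forall>(c, \<omega>)\<in>set ds. 0 \<le> c \<and> \<omega> \<in> qc_ant k H"
    and mass: "0 < weighted_sum ds (\<lambda>_. 1)"
    and members: "\<And>j. j \<in> {1..k} \<Longrightarrow> weighted_sum ds (unit_gain E H p j) = 0"
    and qc: "weighted_sum ds (\<lambda>\<omega>. if \<omega> \<in> qc_cons k E H then 1 else 0) = z * weighted_sum ds (\<lambda>_. 1)"
  shows "fair_weighting (qc_ant k H) (insert 0 {1..k}) (ext_cons k E H) (ext_ant k H) (p(0 := z)) ds"
proof -
  have "weighted_sum ds (unit_gain (ext_cons k E H) (ext_ant k H) (p(0 := z)) 0)
      = weighted_sum ds (\<lambda>\<omega>. (if \<omega> \<in> qc_cons k E H then 1 else 0) + - z)"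
    using nonneg by (intro weighted_sum_cong) (auto simp: unit_gain_ext_qc)
  also have "\<dots> = 0" unfolding weighted_sum_add_const using qc by simp
  finally show ?thesis
    using nonneg mass members unfolding fair_weighting_def by (simp add: unit_gain_ext_member)
qed

lemma sum_mult_if_eq:
  fixes w :: "'a \<Rightarrow> real"
  assumes "finite M" "j \<in> M"
  shows "(\<Sum>m\<in>M. w m * (if m = j then x else y)) = y * sum w M + (x - y) * w j"
proof -
  have "(\<Sum>m\<in>M. w m * (if m = j then x else y)) = (\<Sum>m\<in>M. y * w m + (if m = j then (x - y) * w m else 0))"
    by (rule sum.cong) (auto simp: algebra_simps)
  also have "\<dots> = y * sum w M + (x - y) * w j"
    using assms by (simp add: sum.distrib sum_distrib_left)
  finally show ?thesis .
qed

definition constituent ::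
  "nat \<Rightarrow> (nat \<Rightarrow> 'w set) \<Rightarrow> (nat \<Rightarrow> 'w set) \<Rightarrow> (nat \<Rightarrow> bool) \<Rightarrow> (nat \<Rightarrow> bool) \<Rightarrow> 'w"
  where "constituent n E H a b = (SOME \<omega>. \<forall>i\<in>{1..n}. (\<omega> \<in> E i \<longleftrightarrow> a i) \<and> (\<omega> \<in> H i \<longleftrightarrow> b i))"

lemma constituent_mem:
  assumes "logically_independent n E H" "i \<in> {1..n}"
  shows "constituent n E H a b \<in> E i \<longleftrightarrow> a i" and "constituent n E H a b \<in> H i \<longleftrightarrow> b i"
proof -
  obtain \<omega> where "\<omega> \<in> (\<Inter>i\<in>{1..n}. (if a i then E i else - E i) \<inter> (if b i then H i else - H i))"
    using assms(1) unfolding logically_independent_def by blast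
  then have "\<forall>i\<in>{1..n}. (\<omega> \<in> E i \<longleftrightarrow> a i) \<and> (\<omega> \<in> H i \<longleftrightarrow> b i)"
    by (auto split: if_splits)
  then have "\<forall>i\<in>{1..n}. (constituent n E H a b \<in> E i \<longleftrightarrow> a i) \<and> (constituent n E H a b \<in> H i \<longleftrightarrow> b i)"
    unfolding constituent_def by (rule someI)
  then show "constituent n E H a b \<in> E i \<longleftrightarrow> a i" "constituent n E H a b \<in> H i \<longleftrightarrow> b i"
    using assms(2) by auto
qed

context
  fixes n k :: nat and E H :: "nat \<Rightarrow> 'w set" and p :: "nat \<Rightarrow> real"
  assumes indep: "logically_independent n E H" and k: "1 \<le> k" "k \<le> n"
    and p01: "\<forall>i\<in>{1..k}. 0 \<le> p i \<and> p i \<le> 1"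
begin

lemma unit_gain_constituent:
  "j \<in> {1..k} \<Longrightarrow>
    unit_gain E H p j (constituent n E H a b) = (if b j then (if a j then 1 else 0) - p j else 0)"
  using constituent_mem[OF indep, of j] k by (simp add: unit_gain_def)

lemma constituent_in_qc_cons: "constituent n E H a b \<in> qc_cons k E H \<longleftrightarrow> (\<forall>i\<in>{1..k}. b i \<longrightarrow> a i)"
  using constituent_mem[OF indep] k unfolding qc_cons_def by auto

lemma constituent_in_qc_ant: "constituent n E H a b \<in> qc_ant k H \<longleftrightarrow> (\<exists>i\<in>{1..k}. b i)"
  using constituent_mem[OF indep] k unfolding qc_ant_def by auto

text \<open>Worlds named by the truth values of the conditional events \<open>E i | H i\<close>, \<open>i \<in> {1..k}\<close>;
  in \<open>only_true m\<close> and \<open>only_false m\<close> every other event is void (its antecedent fails).\<close>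

abbreviation "all_true \<equiv> constituent n E H (\<lambda>_. True) (\<lambda>_. True)"
abbreviation "all_false \<equiv> constituent n E H (\<lambda>_. False) (\<lambda>_. True)"
abbreviation "true_except m \<equiv> constituent n E H (\<lambda>i. i \<noteq> m) (\<lambda>_. True)"
abbreviation "only_true m \<equiv> constituent n E H (\<lambda>_. True) (\<lambda>i. i = m)"
abbreviation "only_false m \<equiv> constituent n E H (\<lambda>_. False) (\<lambda>i. i = m)"

lemma unit_gain_worlds:
  assumes "j \<in> {1..k}"
  shows "unit_gain E H p j all_true = 1 - p j"
    and "unit_gain E H p j all_false = - p j"
    and "unit_gain E H p j (true_except m) = (if m = j then - p j else 1 - p j)"
    and "unit_gain E H p j (only_true m) = (if m = j then 1 - p j else 0)"
    and "unit_gain E H p j (only_false m) = (if m = j then - p j else 0)"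
  using assms by (auto simp: unit_gain_constituent)

lemma worlds_in_qc_ant:
  "all_true \<in> qc_ant k H" "all_false \<in> qc_ant k H" "true_except m \<in> qc_ant k H"
  "m \<in> {1..k} \<Longrightarrow> only_true m \<in> qc_ant k H" "m \<in> {1..k} \<Longrightarrow> only_false m \<in> qc_ant k H"
  using k by (auto simp: constituent_in_qc_ant)

lemma worlds_in_qc_cons:
  "all_true \<in> qc_cons k E H" "all_false \<notin> qc_cons k E H"
  "m \<in> {1..k} \<Longrightarrow> true_except m \<notin> qc_cons k E H"
  "only_true m \<in> qc_cons k E H" "m \<in> {1..k} \<Longrightarrow> only_false m \<notin> qc_cons k E H"
  using k by (auto simp: constituent_in_qc_cons)

lemma fair_weighting_at_Lukasiewicz:
  assumes "0 \<le> (\<Sum>i=1..k. p i) - (real k - 1)"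
  shows "\<exists>ds. fair_weighting (qc_ant k H) (insert 0 {1..k}) (ext_cons k E H) (ext_ant k H)
    (p(0 := (\<Sum>i=1..k. p i) - (real k - 1))) ds"
proof -
  define Q where "Q = (\<Sum>i=1..k. 1 - p i)"
  have lukasiewicz_eq: "(\<Sum>i=1..k. p i) - (real k - 1) = 1 - Q" unfolding Q_def by (simp add: sum_subtractf)
  define ds where "ds = (1 - Q, all_true) # map (\<lambda>m. (1 - p m, true_except m)) [1..<Suc k]"
  have mass: "weighted_sum ds (\<lambda>_. 1) = 1"
    by (simp add: ds_def weighted_sum_map_upt Q_def del: upt_Suc)
  have "fair_weighting (qc_ant k H) (insert 0 {1..k}) (ext_cons k E H) (ext_ant k H) (p(0 := 1 - Q)) ds"
  proof (rule fair_weighting_qcI)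
    show "\<forall>(c, \<omega>)\<in>set ds. 0 \<le> c \<and> \<omega> \<in> qc_ant k H"
      using assms p01 lukasiewicz_eq by (auto simp: ds_def worlds_in_qc_ant simp del: upt_Suc)
    show "0 < weighted_sum ds (\<lambda>_. 1)" using mass by simp
    show "weighted_sum ds (unit_gain E H p j) = 0" if "j \<in> {1..k}" for j
    proof -
      have "weighted_sum ds (unit_gain E H p j) = (1 - Q) * (1 - p j) + ((1 - p j) * Q - (1 - p j))"
        using that by (simp add: ds_def weighted_sum_map_upt unit_gain_worlds sum_mult_if_eq Q_def
            del: upt_Suc)
      then show ?thesis by (simp add: algebra_simps)
    qed
    have "weighted_sum ds (\<lambda>\<omega>. if \<omega> \<in> qc_cons k E H then 1 else 0) = 1 - Q"
      by (simp add: ds_def weighted_sum_map_upt worlds_in_qc_cons del: upt_Suc)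
    then show "weighted_sum ds (\<lambda>\<omega>. if \<omega> \<in> qc_cons k E H then 1 else 0)
        = (1 - Q) * weighted_sum ds (\<lambda>_. 1)"
      using mass by simp
  qed
  then show ?thesis using lukasiewicz_eq by metis
qed

lemma fair_weighting_at_zero:
  assumes "(\<Sum>i=1..k. p i) - (real k - 1) \<le> 0"
  shows "\<exists>ds. fair_weighting (qc_ant k H) (insert 0 {1..k}) (ext_cons k E H) (ext_ant k H) (p(0 := 0)) ds"
proof (cases "\<exists>i0\<in>{1..k}. p i0 = 0")
  case True
  then obtain i0 where "i0 \<in> {1..k}" "p i0 = 0" by blast
  then have "fair_weighting (qc_ant k H) (insert 0 {1..k}) (ext_cons k E H) (ext_ant k H) (p(0 := 0))
      [(1, only_false i0)]"
    by (intro fair_weighting_qcI) (auto simp: worlds_in_qc_ant worlds_in_qc_cons unit_gain_worlds)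
  then show ?thesis by blast
next
  case False
  then have p_pos: "0 < p i" if "i \<in> {1..k}" for i using that p01 by force
  define Q where "Q = (\<Sum>i=1..k. 1 - p i)"
  have "1 \<le> Q" using assms unfolding Q_def by (simp add: sum_subtractf)
  define w where "w m = (1 - p m) * (Q - 1) / p m" for m
  have w_nonneg: "0 \<le> w m" if "m \<in> {1..k}" for m
    using that p_pos p01 \<open>1 \<le> Q\<close> by (simp add: w_def)
  define ds where "ds = map (\<lambda>m. (1 - p m, true_except m)) [1..<Suc k]
    @ map (\<lambda>m. (w m, only_false m)) [1..<Suc k]"
  have "fair_weighting (qc_ant k H) (insert 0 {1..k}) (ext_cons k E H) (ext_ant k H) (p(0 := 0)) ds"
  proof (rule fair_weighting_qcI)
    show "\<forall>(c, \<omega>)\<in>set ds. 0 \<le> c \<and> \<omega> \<in> qc_ant k H"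
      using p01 w_nonneg by (auto simp: ds_def worlds_in_qc_ant simp del: upt_Suc)
    have "0 \<le> sum w {1..k}" using w_nonneg by (intro sum_nonneg)
    then show "0 < weighted_sum ds (\<lambda>_. 1)"
      using \<open>1 \<le> Q\<close> by (simp add: ds_def weighted_sum_map_upt Q_def del: upt_Suc)
    show "weighted_sum ds (unit_gain E H p j) = 0" if "j \<in> {1..k}" for j
    proof -
      have "weighted_sum ds (unit_gain E H p j) = ((1 - p j) * Q - (1 - p j)) + - p j * w j"
        using that by (simp add: ds_def weighted_sum_map_upt unit_gain_worlds sum_mult_if_eq Q_def
            del: upt_Suc)
      then show ?thesis using p_pos[OF that] by (simp add: w_def field_simps)
    qed
    show "weighted_sum ds (\<lambda>\<omega>. if \<omega> \<in> qc_cons k E H then 1 else 0) = 0 * weighted_sum ds (\<lambda>_. 1)"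
      by (simp add: ds_def weighted_sum_map_upt worlds_in_qc_cons del: upt_Suc)
  qed
  then show ?thesis by blast
qed

lemma fair_weighting_at_T_L:
  "\<exists>ds. fair_weighting (qc_ant k H) (insert 0 {1..k}) (ext_cons k E H) (ext_ant k H) (p(0 := T_L k p)) ds"
  using fair_weighting_at_Lukasiewicz fair_weighting_at_zero unfolding T_L_def
  by (cases "0 \<le> (\<Sum>i=1..k. p i) - (real k - 1)") (simp_all add: max_def)

lemma fair_weighting_at_S0H:
  "\<exists>ds. fair_weighting (qc_ant k H) (insert 0 {1..k}) (ext_cons k E H) (ext_ant k H) (p(0 := S0H k p)) ds"
proof (cases "\<exists>i\<in>{1..k}. p i = 1")
  case True
  then obtain m0 where "m0 \<in> {1..k}" "p m0 = 1" by blast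
  with True have "fair_weighting (qc_ant k H) (insert 0 {1..k}) (ext_cons k E H) (ext_ant k H)
      (p(0 := S0H k p)) [(1, only_true m0)]"
    by (intro fair_weighting_qcI) (auto simp: worlds_in_qc_ant worlds_in_qc_cons unit_gain_worlds S0H_def)
  then show ?thesis by blast
next
  case False
  then have p_lt: "p i < 1" if "i \<in> {1..k}" for i using p01 that by force
  define w where "w m = p m / (1 - p m)" for m
  have "0 \<le> w m" if "m \<in> {1..k}" for m using that p01 p_lt by (simp add: w_def)
  then have "0 \<le> sum w {1..k}" by (intro sum_nonneg)
  have S0H: "S0H k p = sum w {1..k} / (sum w {1..k} + 1)"
    using False by (simp add: S0H_def Let_def w_def)
  define ds where "ds = (1, all_false) # map (\<lambda>m. (w m, only_true m)) [1..<Suc k]"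
  have mass: "weighted_sum ds (\<lambda>_. 1) = 1 + sum w {1..k}"
    by (simp add: ds_def weighted_sum_map_upt del: upt_Suc)
  have "fair_weighting (qc_ant k H) (insert 0 {1..k}) (ext_cons k E H) (ext_ant k H) (p(0 := S0H k p)) ds"
  proof (rule fair_weighting_qcI)
    show "\<forall>(c, \<omega>)\<in>set ds. 0 \<le> c \<and> \<omega> \<in> qc_ant k H"
      using \<open>\<And>m. m \<in> {1..k} \<Longrightarrow> 0 \<le> w m\<close> by (auto simp: ds_def worlds_in_qc_ant simp del: upt_Suc)
    show "0 < weighted_sum ds (\<lambda>_. 1)" using mass \<open>0 \<le> sum w {1..k}\<close> by simp
    show "weighted_sum ds (unit_gain E H p j) = 0" if "j \<in> {1..k}" for j
    proof -
      have "weighted_sum ds (unit_gain E H p j) = - p j + (1 - p j) * w j"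
        using that by (simp add: ds_def weighted_sum_map_upt unit_gain_worlds sum_mult_if_eq del: upt_Suc)
      then show ?thesis using p_lt[OF that] by (simp add: w_def)
    qed
    have "weighted_sum ds (\<lambda>\<omega>. if \<omega> \<in> qc_cons k E H then 1 else 0) = sum w {1..k}"
      by (simp add: ds_def weighted_sum_map_upt worlds_in_qc_cons del: upt_Suc)
    then show "weighted_sum ds (\<lambda>\<omega>. if \<omega> \<in> qc_cons k E H then 1 else 0)
        = S0H k p * weighted_sum ds (\<lambda>_. 1)"
      using \<open>0 \<le> sum w {1..k}\<close> by (simp add: mass S0H field_simps)
  qed
  then show ?thesis by blast
qed

lemma fair_weighting_members:
  assumes J: "J \<subseteq> {1..k}" "J \<noteq> {}"
  shows "\<exists>ds. fair_weighting (\<Union>j\<in>J. H j) J E H p ds"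
proof -
  have "finite J" using J(1) finite_subset by blast
  define js where "js = sorted_list_of_set J"
  have js: "distinct js" "set js = J" using \<open>finite J\<close> by (simp_all add: js_def)
  define ds where "ds = map (\<lambda>m. (p m, only_true m)) js @ map (\<lambda>m. (1 - p m, only_false m)) js"
  have "only_true m \<in> H m" "only_false m \<in> H m" if "m \<in> J" for m
    using that J(1) k constituent_mem[OF indep, of m] by auto
  then have nonneg: "\<forall>(c, \<omega>)\<in>set ds. 0 \<le> c \<and> \<omega> \<in> (\<Union>j\<in>J. H j)"
    using J(1) p01 js by (auto simp: ds_def)
  have "weighted_sum ds (\<lambda>_. 1) = real (card J)"
    using js by (simp add: ds_def weighted_sum_map sum.distrib[symmetric])
  then have mass: "0 < weighted_sum ds (\<lambda>_. 1)" using \<open>finite J\<close> J(2) by (simp add: card_gt_0_iff)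
  have fair: "weighted_sum ds (unit_gain E H p j) = 0" if "j \<in> J" for j
  proof -
    have "j \<in> {1..k}" using that J(1) by blast
    then have "weighted_sum ds (unit_gain E H p j) = p j * (1 - p j) + (1 - p j) * - p j"
      using js that \<open>finite J\<close> by (simp add: ds_def weighted_sum_map unit_gain_worlds sum_mult_if_eq)
    then show ?thesis by simp
  qed
  show ?thesis unfolding fair_weighting_def using nonneg mass fair by (intro exI[of _ ds]) simp
qed

lemma coherent_if_between_T_L_S0H:
  assumes z: "T_L k p \<le> z" "z \<le> S0H k p"
  shows "coherent (insert 0 {1..k}) (ext_cons k E H) (ext_ant k H) (p(0 := z))"
proof (rule coherentI_fair_weighting)
  fix J assume J: "J \<subseteq> insert 0 {1..k}" "J \<noteq> {}"
  show "\<exists>ds. fair_weighting (\<Union>j\<in>J. ext_ant k H j) J (ext_cons k E H) (ext_ant k H) (p(0 := z)) ds"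
  proof (cases "0 \<in> J")
    case True
    obtain d1 d2 where
      "fair_weighting (qc_ant k H) (insert 0 {1..k}) (ext_cons k E H) (ext_ant k H) (p(0 := T_L k p)) d1"
      "fair_weighting (qc_ant k H) (insert 0 {1..k}) (ext_cons k E H) (ext_ant k H) (p(0 := S0H k p)) d2"
      using fair_weighting_at_T_L fair_weighting_at_S0H by blast
    moreover have "qc_ant k H \<subseteq> ext_ant k H 0" by (simp add: ext_ant_def)
    ultimately obtain ds
      where "fair_weighting (qc_ant k H) (insert 0 {1..k}) (ext_cons k E H) (ext_ant k H) (p(0 := z)) ds"
      by (blast dest: fair_weighting_mix[OF _ _ _ z])
    moreover have "qc_ant k H \<subseteq> (\<Union>j\<in>J. ext_ant k H j)" using True by (force simp: ext_ant_def)
    ultimately show ?thesis using J(1) fair_weighting_mono by blast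
  next
    case False
    then have "J \<subseteq> {1..k}" using J(1) by blast
    then obtain ds where ds: "fair_weighting (\<Union>j\<in>J. H j) J E H p ds"
      using fair_weighting_members J(2) by blast
    have "(\<Union>j\<in>J. ext_ant k H j) = (\<Union>j\<in>J. H j)"
      using False by (intro SUP_cong) (auto simp: ext_ant_def)
    moreover have "\<forall>j\<in>J. unit_gain (ext_cons k E H) (ext_ant k H) (p(0 := z)) j = unit_gain E H p j"
      using False by (metis unit_gain_ext_member)
    ultimately show ?thesis using ds unfolding fair_weighting_def by auto
  qed
qed

end

theorem theorem5:
  fixes n :: nat and E H :: "nat \<Rightarrow> 'w set" and p :: "nat \<Rightarrow> real"
  assumes "logically_independent n E H"
    and "\<forall>i\<in>{1..n}. 0 \<le> p i \<and> p i \<le> 1"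
  shows "\<forall>k\<in>{2..n}.
    {z. coherent (insert 0 {1..k}) (ext_cons k E H) (ext_ant k H) (p(0 := z))}
      = {T_L k p .. S0H k p}"
proof
  fix k assume k: "k \<in> {2..n}"
  then have p01: "\<forall>i\<in>{1..k}. 0 \<le> p i \<and> p i \<le> 1" using assms(2) by auto
  have "1 \<le> k" "k \<le> n" using k by auto
  show "{z. coherent (insert 0 {1..k}) (ext_cons k E H) (ext_ant k H) (p(0 := z))} = {T_L k p .. S0H k p}"
    using T_L_le_if_coherent le_S0H_if_coherent p01
      coherent_if_between_T_L_S0H[OF assms(1) \<open>1 \<le> k\<close> \<open>k \<le> n\<close> p01]
    by fastforce
qed

end
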